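(* Let $B:[0,T]\to\mathbb R$ and $B_u:[0,T]\to\mathbb R$ be solutions of the constrained and unconstrained ODEs of the context, and let $\pi^\ast,\pi_u,\pi_M$ be as in the context. If $\rho=0$ or $\pi_M\in[\alpha,\beta]$, then $\pi^\ast(t)=\mathrm{Cap}(\pi_u(t),\alpha,\beta)$ for all $t\in[0,T]$.
   Context: Parameters: $T>0$; $\eta,\kappa,\sigma>0$; $\rho\in(-1,1)$; $b<1$, $b\ne0$; $K=[\alpha,\beta]$, $-\infty\le\alpha<\beta\le\infty$; $\delta_K(x)=-\alpha x\mathbf 1_{\{x>0\}}-\beta x\mathbf 1_{\{x<0\}}$. $B_-=\frac{(1-b)\alpha-\eta}\sigma$, $B_+=\frac{(1-b)\beta-\eta}\sigma$; $r_0=-\frac b{2(1-b)}\eta^2$, $r_1=\frac b{1-b}\eta\sigma\rho-\kappa$, $r_2=\sigma^2(1+\frac b{1-b}\rho^2)$. Constrained ODE: $B'(\tau)=-\kappa B+\frac12\sigma^2B^2+\frac12\frac b{1-b}\inf_{\lambda\in\mathbb R}(2(1-b)\delta_K(\lambda)+(\eta+\lambda+\sigma\rho B)^2)$, $B(0)=0$. Unconstrained ODE: $B_u'(\tau)=-r_0+r_1B_u+\frac12r_2B_u^2$, $B_u(0)=0$. $\lambda^\ast(B)=[(1-b)\alpha-(\eta+\sigma\rho B)]\mathbf 1_{\{\rho B<B_-\}}+[(1-b)\beta-(\eta+\sigma\rho B)]\mathbf 1_{\{\rho B>B_+\}}$; $\pi^\ast(t)=\frac1{1-b}(\eta+\lambda^\ast(B(T-t))+\sigma\rho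 B(T-t))$; $\pi_u(t)=\frac1{1-b}(\eta+\sigma\rho B_u(T-t))$; $\pi_M=\frac\eta{1-b}$; $\mathrm{Cap}(x,\alpha,\beta)=\alpha$ if $x<\alpha$, $x$ if $\alpha\le x\le\beta$, $\beta$ if $x>\beta$. *)

theory Defs
  imports "HOL-Analysis.Analysis" "HOL-Library.Extended_Real"
begin

text \<open>The bounds alpha, beta of K = [alpha, beta] may be infinite, so they are extended reals.\<close>

definition deltaK :: "ereal \<Rightarrow> ereal \<Rightarrow> real \<Rightarrow> ereal" where
  "deltaK \<alpha> \<beta> x =
     (if x > 0 then - \<alpha> * ereal x else if x < 0 then - \<beta> * ereal x else 0)"

definition B_minus :: "real \<Rightarrow> real \<Rightarrow> real \<Rightarrow> ereal \<Rightarrow> ereal" where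
  "B_minus b \<eta> \<sigma> \<alpha> = (ereal (1 - b) * \<alpha> - ereal \<eta>) / ereal \<sigma>"

definition B_plus :: "real \<Rightarrow> real \<Rightarrow> real \<Rightarrow> ereal \<Rightarrow> ereal" where
  "B_plus b \<eta> \<sigma> \<beta> = (ereal (1 - b) * \<beta> - ereal \<eta>) / ereal \<sigma>"

definition r0 :: "real \<Rightarrow> real \<Rightarrow> real" where
  "r0 b \<eta> = - b / (2 * (1 - b)) * \<eta>^2"

definition r1 :: "real \<Rightarrow> real \<Rightarrow> real \<Rightarrow> real \<Rightarrow> real \<Rightarrow> real" where
  "r1 b \<eta> \<sigma> \<rho> \<kappa> = b / (1 - b) * \<eta> * \<sigma> * \<rho> - \<kappa>"

definition r2 :: "real \<Rightarrow> real \<Rightarrow> real \<Rightarrow> real" where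
  "r2 b \<sigma> \<rho> = \<sigma>^2 * (1 + b / (1 - b) * \<rho>^2)"

text \<open>Right-hand side of the constrained ODE (the infimum is finite; it is taken in ereal
  since delta_K may be +infinity).\<close>
definition constr_rhs ::
  "real \<Rightarrow> real \<Rightarrow> real \<Rightarrow> real \<Rightarrow> real \<Rightarrow> ereal \<Rightarrow> ereal \<Rightarrow> real \<Rightarrow> real" where
  "constr_rhs b \<eta> \<kappa> \<sigma> \<rho> \<alpha> \<beta> B =
     - \<kappa> * B + 1/2 * \<sigma>^2 * B^2
     + 1/2 * (b / (1 - b)) *
       real_of_ereal (INF l\<in>UNIV. ereal (2 * (1 - b)) * deltaK \<alpha> \<beta> l
                                  + ereal ((\<eta> + l + \<sigma> * \<rho> * B)^2))"

definition unconstr_rhs :: "real \<Rightarrow> real \<Rightarrow> real \<Rightarrow> real \<Rightarrow> real \<Rightarrow> real \<Rightarrow> real" where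
  "unconstr_rhs b \<eta> \<kappa> \<sigma> \<rho> B =
     - r0 b \<eta> + r1 b \<eta> \<sigma> \<rho> \<kappa> * B + 1/2 * r2 b \<sigma> \<rho> * B^2"

text \<open>lambda^*(B); when an indicator is true the corresponding bound is finite.\<close>
definition lambda_star :: "real \<Rightarrow> real \<Rightarrow> real \<Rightarrow> real \<Rightarrow> ereal \<Rightarrow> ereal \<Rightarrow> real \<Rightarrow> real" where
  "lambda_star b \<eta> \<sigma> \<rho> \<alpha> \<beta> B =
     (if ereal (\<rho> * B) < B_minus b \<eta> \<sigma> \<alpha>
      then real_of_ereal (ereal (1 - b) * \<alpha>) - (\<eta> + \<sigma> * \<rho> * B) else 0)
   + (if ereal (\<rho> * B) > B_plus b \<eta> \<sigma> \<beta>
      then real_of_ereal (ereal (1 - b) * \<beta>) - (\<eta> + \<sigma> * \<rho> * B) else 0)"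

definition pi_star ::
  "real \<Rightarrow> real \<Rightarrow> real \<Rightarrow> real \<Rightarrow> ereal \<Rightarrow> ereal \<Rightarrow> real \<Rightarrow> (real \<Rightarrow> real) \<Rightarrow> real \<Rightarrow> real" where
  "pi_star b \<eta> \<sigma> \<rho> \<alpha> \<beta> T B t =
     1 / (1 - b) * (\<eta> + lambda_star b \<eta> \<sigma> \<rho> \<alpha> \<beta> (B (T - t)) + \<sigma> * \<rho> * B (T - t))"

definition pi_u :: "real \<Rightarrow> real \<Rightarrow> real \<Rightarrow> real \<Rightarrow> real \<Rightarrow> (real \<Rightarrow> real) \<Rightarrow> real \<Rightarrow> real" where
  "pi_u b \<eta> \<sigma> \<rho> T Bu t = 1 / (1 - b) * (\<eta> + \<sigma> * \<rho> * Bu (T - t))"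

definition pi_M :: "real \<Rightarrow> real \<Rightarrow> real" where
  "pi_M b \<eta> = \<eta> / (1 - b)"

definition Cap :: "real \<Rightarrow> ereal \<Rightarrow> ereal \<Rightarrow> real" where
  "Cap x \<alpha> \<beta> = (if ereal x < \<alpha> then real_of_ereal \<alpha>
                   else if ereal x \<le> \<beta> then x else real_of_ereal \<beta>)"

end

theory Submission
  imports Defs
begin

(* Let Z = (eta + sigma rho B)/(1-b) and Z_u = (eta + sigma rho B_u)/(1-b), so that
   pi^*(t) = Cap(Z(T-t)) and pi_u(t) = Z_u(T-t); for rho = 0 both sides equal Cap(pi_M).
   The infimum in the constrained ODE equals x^2 - dist(x, (1-b)K)^2, so Z and Z_u solve
   autonomous ODEs with locally Lipschitz right-hand sides that coincide on K, and both start
   at pi_M in K.  By uniqueness Z = Z_u as long as Z_u stays in K.  When Z_u first reaches a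
   boundary point e of K, the common sign of the two velocity fields at e traps both solutions
   on the same side of e (comparison principle), so their Caps agree from then on. *)

lemma pos_part_sq_has_real_derivative:
  "((\<lambda>x::real. (max x 0)^2) has_real_derivative 2 * max x 0) (at x)"
proof (cases x "0::real" rule: linorder_cases)
  case less
  show ?thesis
    by (rule has_field_derivative_transform_within_open[where f = "\<lambda>_. 0" and S = "{..<0}"])
       (use less in auto)
next
  case equal
  have "\<forall>z::real. (max z 0)^2 - (max 0 0)^2 = max z 0 * (z - 0)"
    by (simp add: max_def power2_eq_square)
  moreover have "isCont (\<lambda>z::real. max z 0) 0" by (intro continuous_intros)
  ultimately show ?thesis
    unfolding equal CARAT_DERIV by (intro exI[of _ "\<lambda>z. max z 0"]) auto
next
  case greater
  show ?thesis
    by (rule has_field_derivative_transform_within_open[where f = "\<lambda>x. x^2" and S = "{0<..}"])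
       (use greater in \<open>auto intro!: derivative_eq_intros\<close>)
qed

lemma nonpos_if_differential_inequality:
  fixes D D' :: "real \<Rightarrow> real"
  assumes der: "\<And>t. t \<in> {a..b} \<Longrightarrow> (D has_real_derivative D' t) (at t within {a..b})"
    and "D a \<le> 0"
    and ineq: "\<And>t. t \<in> {a..b} \<Longrightarrow> 0 < D t \<Longrightarrow> D t * D' t \<le> L * (D t)^2"
    and t: "t \<in> {a..b}"
  shows "D t \<le> 0"
proof -
  define w where "w t = (max (D t) 0)^2 * exp (-2 * L * t)" for t
  have "w t \<le> w a"
  proof (rule DERIV_nonpos_imp_decreasing_open[where f = w])
    show "continuous_on {a..t} w"
      unfolding w_def using DERIV_continuous_on[OF der] t
      by (intro continuous_intros) (auto intro: continuous_on_subset)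
    fix x assume x: "a < x" "x < t"
    then have "(D has_real_derivative D' x) (at x)"
      using der[of x] t at_within_Icc_at[of a x b] by auto
    then have "((\<lambda>t. (max (D t) 0)^2) has_real_derivative 2 * max (D x) 0 * D' x) (at x)"
      by (rule DERIV_chain2[OF pos_part_sq_has_real_derivative])
    moreover have "((\<lambda>t. exp (-2 * L * t)) has_real_derivative exp (-2 * L * x) * (-2 * L)) (at x)"
      by (auto intro!: derivative_eq_intros)
    ultimately have "(w has_real_derivative
        2 * max (D x) 0 * D' x * exp (-2 * L * x) + exp (-2 * L * x) * (-2 * L) * (max (D x) 0)^2) (at x)"
      unfolding w_def by (rule DERIV_mult)
    moreover have "max (D x) 0 * D' x \<le> L * (max (D x) 0)^2"
      using ineq[of x] x t by (cases "0 < D x") (auto simp: max_def)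
    then have "2 * max (D x) 0 * D' x * exp (-2 * L * x) + exp (-2 * L * x) * (-2 * L) * (max (D x) 0)^2 \<le> 0"
      by (simp add: algebra_simps mult_nonpos_nonneg flip: distrib_left)
    ultimately show "\<exists>y. (w has_real_derivative y) (at x) \<and> y \<le> 0" by blast
  qed (use t in auto)
  moreover have "w a = 0" using \<open>D a \<le> 0\<close> by (simp add: w_def)
  ultimately show "D t \<le> 0"
    by (simp add: w_def max_def mult_le_0_iff split: if_splits)
qed

lemma ODE_comparison:
  fixes X Y F :: "real \<Rightarrow> real"
  assumes dX: "\<And>t. t \<in> {a..b} \<Longrightarrow> (X has_real_derivative X' t) (at t within {a..b})"
    and dY: "\<And>t. t \<in> {a..b} \<Longrightarrow> (Y has_real_derivative Y' t) (at t within {a..b})"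
    and sub: "\<And>t. t \<in> {a..b} \<Longrightarrow> X' t \<le> F (X t)"
    and super: "\<And>t. t \<in> {a..b} \<Longrightarrow> F (Y t) \<le> Y' t"
    and lip: "L-lipschitz_on S F" and XS: "X ` {a..b} \<subseteq> S" and YS: "Y ` {a..b} \<subseteq> S"
    and "X a \<le> Y a" and t: "t \<in> {a..b}"
  shows "X t \<le> Y t"
proof -
  have "(\<lambda>t. X t - Y t) t \<le> 0"
  proof (rule nonpos_if_differential_inequality[where D = "\<lambda>t. X t - Y t" and D' = "\<lambda>t. X' t - Y' t" and L = L])
    fix t assume t: "t \<in> {a..b}" and pos: "0 < X t - Y t"
    have "\<bar>F (X t) - F (Y t)\<bar> \<le> L * \<bar>X t - Y t\<bar>"
      using lipschitz_onD[OF lip, of "X t" "Y t"] XS YS t by (auto simp: dist_real_def image_subset_iff)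
    then have "X' t - Y' t \<le> L * (X t - Y t)"
      using sub[OF t] super[OF t] pos by linarith
    then show "(X t - Y t) * (X' t - Y' t) \<le> L * (X t - Y t)^2"
      using pos mult_left_mono by (fastforce simp: power2_eq_square)
  qed (use dX dY \<open>X a \<le> Y a\<close> t in \<open>auto intro!: derivative_eq_intros\<close>)
  then show ?thesis by simp
qed

lemma ODE_unique:
  fixes X Y F :: "real \<Rightarrow> real"
  assumes "\<And>t. t \<in> {a..b} \<Longrightarrow> (X has_real_derivative F (X t)) (at t within {a..b})"
    and "\<And>t. t \<in> {a..b} \<Longrightarrow> (Y has_real_derivative F (Y t)) (at t within {a..b})"
    and "L-lipschitz_on S F" "X ` {a..b} \<subseteq> S" "Y ` {a..b} \<subseteq> S"
    and "X a = Y a" "t \<in> {a..b}"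
  shows "X t = Y t"
  using ODE_comparison[of a b X "\<lambda>t. F (X t)" Y "\<lambda>t. F (Y t)" F L S t]
    ODE_comparison[of a b Y "\<lambda>t. F (Y t)" X "\<lambda>t. F (X t)" F L S t] assms
  by (auto intro: antisym)

lemma ODE_stays_above:
  fixes X F :: "real \<Rightarrow> real"
  assumes "\<And>t. t \<in> {a..b} \<Longrightarrow> (X has_real_derivative F (X t)) (at t within {a..b})"
    and "L-lipschitz_on S F" "X ` {a..b} \<subseteq> S" "e \<in> S"
    and "0 \<le> F e" "e \<le> X a" "t \<in> {a..b}"
  shows "e \<le> X t"
  using ODE_comparison[of a b "\<lambda>_. e" "\<lambda>_. 0" X "\<lambda>t. F (X t)" F L S t] assms by auto

lemma ODE_stays_below:
  fixes X F :: "real \<Rightarrow> real"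
  assumes "\<And>t. t \<in> {a..b} \<Longrightarrow> (X has_real_derivative F (X t)) (at t within {a..b})"
    and "L-lipschitz_on S F" "X ` {a..b} \<subseteq> S" "e \<in> S"
    and "F e \<le> 0" "X a \<le> e" "t \<in> {a..b}"
  shows "X t \<le> e"
  using ODE_comparison[of a b X "\<lambda>t. F (X t)" "\<lambda>_. e" "\<lambda>_. 0" F L S t] assms by auto

lemma first_exit_time:
  fixes Y :: "real \<Rightarrow> 'a::topological_space"
  assumes cont: "continuous_on {a..b} Y" and "closed K" "Y a \<in> K"
    and t1: "t1 \<in> {a..b}" "Y t1 \<notin> K"
  obtains s where "s \<in> {a..b}" "\<And>t. t \<in> {a..s} \<Longrightarrow> Y t \<in> K"
    and "\<And>U. open U \<Longrightarrow> Y s \<in> U \<Longrightarrow> \<exists>t\<in>{s..b}. Y t \<in> U \<and> Y t \<notin> K"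
proof -
  define P where "P = {t \<in> {a..b}. Y t \<notin> K}"
  have "P \<noteq> {}" using t1 by (auto simp: P_def)
  have "bdd_below P" by (rule bdd_belowI[of _ a]) (simp add: P_def)
  define s where "s = Inf P"
  have "a \<le> s" unfolding s_def by (rule cInf_greatest[OF \<open>P \<noteq> {}\<close>]) (simp add: P_def)
  moreover have "s \<le> t1" unfolding s_def by (rule cInf_lower[OF _ \<open>bdd_below P\<close>]) (use t1 in \<open>simp add: P_def\<close>)
  ultimately have s: "s \<in> {a..b}" using t1 by simp
  have before: "Y t \<in> K" if "t \<in> {a..b}" "t < s" for t
    using cInf_lower[OF _ \<open>bdd_below P\<close>, of t] that by (force simp: s_def P_def)
  have near: "\<exists>d>0. \<forall>t\<in>{a..b}. t \<noteq> s \<and> dist t s < d \<longrightarrow> Y t \<in> U" if "open U" "Y s \<in> U" for U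
    using cont s that unfolding continuous_on_def by (auto dest!: topological_tendstoD simp: eventually_at)
  have Ys: "Y s \<in> K"
  proof (rule ccontr)
    assume "Y s \<notin> K"
    then obtain d where "d > 0" and d: "\<And>t. t \<in> {a..b} \<Longrightarrow> t \<noteq> s \<Longrightarrow> dist t s < d \<Longrightarrow> Y t \<notin> K"
      using near[of "- K"] \<open>closed K\<close> by (auto simp: open_Compl)
    have "s \<noteq> a" using \<open>Y s \<notin> K\<close> \<open>Y a \<in> K\<close> by auto
    then show False
      using d[of "max a (s - d/2)"] before[of "max a (s - d/2)"] s \<open>d > 0\<close> by (auto simp: dist_real_def)
  qed
  show thesis
  proof
    show "s \<in> {a..b}" by (fact s)
    show "Y t \<in> K" if "t \<in> {a..s}" for t
      using before[of t] Ys that s by (cases "t = s") auto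
    fix U assume "open U" "Y s \<in> U"
    then obtain d where "d > 0" and d: "\<And>t. t \<in> {a..b} \<Longrightarrow> t \<noteq> s \<Longrightarrow> dist t s < d \<Longrightarrow> Y t \<in> U"
      using near by blast
    obtain p where "p \<in> P" "p < s + d"
      using cInf_less_iff[OF \<open>P \<noteq> {}\<close> \<open>bdd_below P\<close>, of "s + d"] \<open>d > 0\<close> by (auto simp: s_def)
    moreover have "s \<le> p" using cInf_lower[OF \<open>p \<in> P\<close> \<open>bdd_below P\<close>] by (simp add: s_def)
    moreover have "p \<noteq> s" using \<open>p \<in> P\<close> Ys by (auto simp: P_def)
    ultimately show "\<exists>t\<in>{s..b}. Y t \<in> U \<and> Y t \<notin> K"
      using d[of p] \<open>p \<in> P\<close> by (auto simp: P_def dist_real_def)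
  qed
qed

definition locally_lipschitz :: "('a::metric_space \<Rightarrow> 'b::metric_space) \<Rightarrow> bool" where
  "locally_lipschitz f \<longleftrightarrow> (\<forall>K. compact K \<longrightarrow> (\<exists>L. L-lipschitz_on K f))"

lemma locally_lipschitzE:
  assumes "locally_lipschitz f" "compact K"
  obtains L where "L-lipschitz_on K f"
  using assms by (auto simp: locally_lipschitz_def)

lemma locally_lipschitz_const: "locally_lipschitz (\<lambda>x. c)"
  using lipschitz_on_constant by (auto simp: locally_lipschitz_def)

lemma locally_lipschitz_ident: "locally_lipschitz (\<lambda>x. x)"
  using lipschitz_on_id by (auto simp: locally_lipschitz_def)

lemma locally_lipschitz_compose:
  fixes g :: "'a::metric_space \<Rightarrow> 'b::metric_space" and f :: "'b \<Rightarrow> 'c::metric_space"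
  assumes f: "locally_lipschitz f" and g: "locally_lipschitz g"
  shows "locally_lipschitz (\<lambda>x. f (g x))"
  unfolding locally_lipschitz_def
proof (intro allI impI)
  fix K :: "'a set" assume "compact K"
  obtain C where C: "C-lipschitz_on K g" using g \<open>compact K\<close> by (rule locally_lipschitzE)
  then have "compact (g ` K)"
    using \<open>compact K\<close> lipschitz_on_continuous_on compact_continuous_image by blast
  obtain D where "D-lipschitz_on (g ` K) f" using f \<open>compact (g ` K)\<close> by (rule locally_lipschitzE)
  then show "\<exists>L. L-lipschitz_on K (\<lambda>x. f (g x))" using lipschitz_on_compose2[OF C] by blast
qed

lemma locally_lipschitz_add:
  fixes f g :: "'a::metric_space \<Rightarrow> 'b::real_normed_vector"
  assumes "locally_lipschitz f" "locally_lipschitz g"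
  shows "locally_lipschitz (\<lambda>x. f x + g x)"
  unfolding locally_lipschitz_def
proof (intro allI impI)
  fix K :: "'a set" assume "compact K"
  with assms obtain C D where "C-lipschitz_on K f" "D-lipschitz_on K g" by (metis locally_lipschitzE)
  then show "\<exists>L. L-lipschitz_on K (\<lambda>x. f x + g x)" by (blast intro: lipschitz_on_add)
qed

lemma locally_lipschitz_diff:
  fixes f g :: "'a::metric_space \<Rightarrow> 'b::real_normed_vector"
  assumes "locally_lipschitz f" "locally_lipschitz g"
  shows "locally_lipschitz (\<lambda>x. f x - g x)"
  unfolding locally_lipschitz_def
proof (intro allI impI)
  fix K :: "'a set" assume "compact K"
  with assms obtain C D where "C-lipschitz_on K f" "D-lipschitz_on K g" by (metis locally_lipschitzE)
  then show "\<exists>L. L-lipschitz_on K (\<lambda>x. f x - g x)" by (blast intro: lipschitz_on_diff)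
qed

lemma locally_lipschitz_minus:
  fixes f :: "'a::metric_space \<Rightarrow> 'b::real_normed_vector"
  assumes "locally_lipschitz f"
  shows "locally_lipschitz (\<lambda>x. - f x)"
  using assms unfolding locally_lipschitz_def by simp

lemma locally_lipschitz_mult:
  fixes f g :: "'a::metric_space \<Rightarrow> 'b::real_normed_algebra"
  assumes f: "locally_lipschitz f" and g: "locally_lipschitz g"
  shows "locally_lipschitz (\<lambda>x. f x * g x)"
  unfolding locally_lipschitz_def
proof (intro allI impI)
  fix K :: "'a set" assume K: "compact K"
  obtain C D where C: "C-lipschitz_on K f" and D: "D-lipschitz_on K g"
    using locally_lipschitzE[OF f K] locally_lipschitzE[OF g K] by metis
  have "compact (f ` K)" "compact (g ` K)"
    using K C D lipschitz_on_continuous_on compact_continuous_image by blast+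
  then obtain A B where "A > 0" "B > 0"
    and A: "\<And>x. x \<in> K \<Longrightarrow> norm (f x) \<le> A" and B: "\<And>x. x \<in> K \<Longrightarrow> norm (g x) \<le> B"
    by (auto simp: bounded_pos dest!: compact_imp_bounded)
  note CD_nonneg = lipschitz_on_nonneg[OF C] lipschitz_on_nonneg[OF D]
  have "(A * D + B * C)-lipschitz_on K (\<lambda>x. f x * g x)"
  proof (rule lipschitz_onI)
    fix x y assume xy: "x \<in> K" "y \<in> K"
    have "f x * g x - f y * g y = f x * (g x - g y) + (f x - f y) * g y"
      by (simp add: right_diff_distrib left_diff_distrib)
    then have "dist (f x * g x) (f y * g y) = norm (f x * (g x - g y) + (f x - f y) * g y)"
      by (simp add: dist_norm)
    also have "\<dots> \<le> norm (f x * (g x - g y)) + norm ((f x - f y) * g y)"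
      by (rule norm_triangle_ineq)
    also have "\<dots> \<le> norm (f x) * dist (g x) (g y) + dist (f x) (f y) * norm (g y)"
      unfolding dist_norm by (intro add_mono norm_mult_ineq)
    also have "\<dots> \<le> A * (D * dist x y) + C * dist x y * B"
      using xy A B lipschitz_onD[OF C xy] lipschitz_onD[OF D xy] CD_nonneg \<open>A > 0\<close> \<open>B > 0\<close>
      by (intro add_mono mult_mono) auto
    finally show "dist (f x * g x) (f y * g y) \<le> (A * D + B * C) * dist x y"
      by (simp add: algebra_simps)
  next
    show "0 \<le> A * D + B * C"
      using \<open>A > 0\<close> \<open>B > 0\<close> CD_nonneg by simp
  qed
  then show "\<exists>L. L-lipschitz_on K (\<lambda>x. f x * g x)" by blast
qed

lemma locally_lipschitz_power:
  fixes f :: "'a::metric_space \<Rightarrow> 'b::real_normed_algebra_1"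
  assumes "locally_lipschitz f"
  shows "locally_lipschitz (\<lambda>x. f x ^ n)"
  by (induction n) (simp_all add: locally_lipschitz_const locally_lipschitz_mult assms)

lemma locally_lipschitz_divide:
  fixes f :: "'a::metric_space \<Rightarrow> 'b::real_normed_field"
  assumes "locally_lipschitz f"
  shows "locally_lipschitz (\<lambda>x. f x / c)"
  unfolding divide_inverse by (intro locally_lipschitz_mult locally_lipschitz_const assms)

lemma Cap_bounds:
  assumes "\<alpha> < \<beta>"
  shows "\<alpha> \<le> ereal (Cap x \<alpha> \<beta>)" "ereal (Cap x \<alpha> \<beta>) \<le> \<beta>"
  using assms by (cases \<alpha>; cases \<beta>; auto simp: Cap_def)+

lemma Cap_eq_self: "\<alpha> \<le> ereal x \<Longrightarrow> ereal x \<le> \<beta> \<Longrightarrow> Cap x \<alpha> \<beta> = x"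
  by (auto simp: Cap_def)

lemma Cap_eq_upper: "\<alpha> < \<beta> \<Longrightarrow> \<beta> \<le> ereal x \<Longrightarrow> Cap x \<alpha> \<beta> = real_of_ereal \<beta>"
  by (cases \<alpha>; cases \<beta>) (auto simp: Cap_def)

lemma Cap_eq_lower: "\<alpha> < \<beta> \<Longrightarrow> ereal x \<le> \<alpha> \<Longrightarrow> Cap x \<alpha> \<beta> = real_of_ereal \<alpha>"
  by (cases \<alpha>; cases \<beta>) (auto simp: Cap_def)

lemma lipschitz_on_Cap:
  assumes "\<alpha> < \<beta>"
  shows "1-lipschitz_on S (\<lambda>x. Cap x \<alpha> \<beta>)"
proof (rule lipschitz_onI)
  fix x y :: real
  show "dist (Cap x \<alpha> \<beta>) (Cap y \<alpha> \<beta>) \<le> 1 * dist x y"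
    using assms by (cases \<alpha>; cases \<beta>) (auto simp: Cap_def dist_real_def)
qed simp

lemma locally_lipschitz_Cap:
  assumes "\<alpha> < \<beta>" "locally_lipschitz f"
  shows "locally_lipschitz (\<lambda>x. Cap (f x) \<alpha> \<beta>)"
proof -
  have "locally_lipschitz (\<lambda>x. Cap x \<alpha> \<beta>)"
    using lipschitz_on_Cap[OF assms(1)] by (auto simp: locally_lipschitz_def)
  then show ?thesis using assms(2) by (rule locally_lipschitz_compose)
qed

definition ereal_interval :: "ereal \<Rightarrow> ereal \<Rightarrow> real set" where
  "ereal_interval \<alpha> \<beta> = {x. \<alpha> \<le> ereal x \<and> ereal x \<le> \<beta>}"

lemma closed_ereal_interval: "closed (ereal_interval \<alpha> \<beta>)"
  unfolding ereal_interval_def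
  by (intro closed_Collect_conj closed_Collect_le continuous_on_ereal continuous_on_id continuous_on_const)

lemma exit_upwards_at_upper_bound:
  fixes Y :: "real \<Rightarrow> real"
  assumes exits: "\<And>U. open U \<Longrightarrow> Y s \<in> U \<Longrightarrow> \<exists>t\<in>{s..b}. Y t \<in> U \<and> Y t \<notin> ereal_interval \<alpha> \<beta>"
    and Ys: "Y s \<in> ereal_interval \<alpha> \<beta>" and up: "\<And>t. t \<in> {s..b} \<Longrightarrow> Y s \<le> Y t"
  shows "ereal (Y s) = \<beta>"
proof (rule ccontr)
  assume "ereal (Y s) \<noteq> \<beta>"
  then have "ereal (Y s) < \<beta>" using Ys by (auto simp: ereal_interval_def order.order_iff_strict)
  moreover have "open {y. ereal y < \<beta>}"
    by (intro open_Collect_less continuous_on_ereal continuous_on_id continuous_on_const)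
  ultimately obtain t where "t \<in> {s..b}" "ereal (Y t) < \<beta>" "Y t \<notin> ereal_interval \<alpha> \<beta>"
    using exits by blast
  then show False
    using Ys up[of t] order_trans[of \<alpha> "ereal (Y s)" "ereal (Y t)"] by (auto simp: ereal_interval_def)
qed

lemma exit_downwards_at_lower_bound:
  fixes Y :: "real \<Rightarrow> real"
  assumes exits: "\<And>U. open U \<Longrightarrow> Y s \<in> U \<Longrightarrow> \<exists>t\<in>{s..b}. Y t \<in> U \<and> Y t \<notin> ereal_interval \<alpha> \<beta>"
    and Ys: "Y s \<in> ereal_interval \<alpha> \<beta>" and down: "\<And>t. t \<in> {s..b} \<Longrightarrow> Y t \<le> Y s"
  shows "ereal (Y s) = \<alpha>"
proof (rule ccontr)
  assume "ereal (Y s) \<noteq> \<alpha>"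
  then have "\<alpha> < ereal (Y s)" using Ys by (auto simp: ereal_interval_def order.order_iff_strict)
  moreover have "open {y. \<alpha> < ereal y}"
    by (intro open_Collect_less continuous_on_ereal continuous_on_id continuous_on_const)
  ultimately obtain t where "t \<in> {s..b}" "\<alpha> < ereal (Y t)" "Y t \<notin> ereal_interval \<alpha> \<beta>"
    using exits by blast
  then show False
    using Ys down[of t] order_trans[of "ereal (Y t)" "ereal (Y s)" \<beta>] by (auto simp: ereal_interval_def)
qed

lemma autonomous_ODEs_Cap_eq_after_exit:
  fixes X Y F G :: "real \<Rightarrow> real"
  assumes "\<alpha> < \<beta>"
    and dX: "\<And>t. t \<in> {s..b} \<Longrightarrow> (X has_real_derivative F (X t)) (at t within {s..b})"
    and dY: "\<And>t. t \<in> {s..b} \<Longrightarrow> (Y has_real_derivative G (Y t)) (at t within {s..b})"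
    and "LF-lipschitz_on S F" "LG-lipschitz_on S G" "X ` {s..b} \<subseteq> S" "Y ` {s..b} \<subseteq> S" "Y s \<in> S"
    and "X s = Y s" "F (Y s) = G (Y s)" and Ys: "Y s \<in> ereal_interval \<alpha> \<beta>"
    and exits: "\<And>U. open U \<Longrightarrow> Y s \<in> U \<Longrightarrow> \<exists>t\<in>{s..b}. Y t \<in> U \<and> Y t \<notin> ereal_interval \<alpha> \<beta>"
    and t: "t \<in> {s..b}"
  shows "Cap (X t) \<alpha> \<beta> = Cap (Y t) \<alpha> \<beta>"
proof (cases "0 \<le> F (Y s)")
  case True
  have "Y s \<le> X u" "Y s \<le> Y u" if "u \<in> {s..b}" for u
    using ODE_stays_above[OF dX] ODE_stays_above[OF dY] assms(4-10) True that by auto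
  then show ?thesis
    using exit_upwards_at_upper_bound[OF exits Ys] t Cap_eq_upper[OF \<open>\<alpha> < \<beta>\<close>] by fastforce
next
  case False
  have "X u \<le> Y s" "Y u \<le> Y s" if "u \<in> {s..b}" for u
    using ODE_stays_below[OF dX] ODE_stays_below[OF dY] assms(4-10) False that by auto
  then show ?thesis
    using exit_downwards_at_lower_bound[OF exits Ys] t Cap_eq_lower[OF \<open>\<alpha> < \<beta>\<close>] by fastforce
qed

lemma autonomous_ODEs_Cap_eq_lipschitz_on:
  fixes X Y F G :: "real \<Rightarrow> real"
  assumes "\<alpha> < \<beta>"
    and dX: "\<And>t. t \<in> {a..b} \<Longrightarrow> (X has_real_derivative F (X t)) (at t within {a..b})"
    and dY: "\<And>t. t \<in> {a..b} \<Longrightarrow> (Y has_real_derivative G (Y t)) (at t within {a..b})"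
    and FG: "\<And>y. y \<in> ereal_interval \<alpha> \<beta> \<Longrightarrow> F y = G y"
    and LF: "LF-lipschitz_on S F" and LG: "LG-lipschitz_on S G"
    and XS: "X ` {a..b} \<subseteq> S" and YS: "Y ` {a..b} \<subseteq> S"
    and "X a = Y a" "Y a \<in> ereal_interval \<alpha> \<beta>" and t: "t \<in> {a..b}"
  shows "Cap (X t) \<alpha> \<beta> = Cap (Y t) \<alpha> \<beta>"
proof -
  have sub_interval: "{c..d} \<subseteq> {a..b}" if "c \<in> {a..b}" "d \<in> {a..b}" for c d
    using that by auto
  note dX' = has_field_derivative_subset[OF dX sub_interval]
    and dY' = has_field_derivative_subset[OF dY sub_interval]
  have agree: "X t = Y t"
    if s: "s \<in> {a..b}" "\<And>t. t \<in> {a..s} \<Longrightarrow> Y t \<in> ereal_interval \<alpha> \<beta>" and "t \<in> {a..s}" for s t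
  proof (rule ODE_unique[where a = a and b = s and X = X and Y = Y and F = F and L = LF and S = S])
    fix u assume u: "u \<in> {a..s}"
    show "(X has_real_derivative F (X u)) (at u within {a..s})" using dX'[of u a s] u s by auto
    show "(Y has_real_derivative F (Y u)) (at u within {a..s})" using dY'[of u a s] u s FG by auto
  qed (use s \<open>X a = Y a\<close> LF XS YS \<open>t \<in> {a..s}\<close> in auto)
  show ?thesis
  proof (cases "\<forall>t\<in>{a..b}. Y t \<in> ereal_interval \<alpha> \<beta>")
    case True
    then show ?thesis using agree[of b t] t by auto
  next
    case False
    then obtain s where s: "s \<in> {a..b}" and inK: "\<And>t. t \<in> {a..s} \<Longrightarrow> Y t \<in> ereal_interval \<alpha> \<beta>"
      and exits: "\<And>U. open U \<Longrightarrow> Y s \<in> U \<Longrightarrow> \<exists>t\<in>{s..b}. Y t \<in> U \<and> Y t \<notin> ereal_interval \<alpha> \<beta>"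
      using first_exit_time[OF DERIV_continuous_on[OF dY] closed_ereal_interval \<open>Y a \<in> _\<close>] by metis
    have Ys: "Y s \<in> ereal_interval \<alpha> \<beta>" using inK s by auto
    show ?thesis
    proof (cases "t \<le> s")
      case True
      then show ?thesis using agree[OF s inK, of t] t by auto
    next
      case False
      show ?thesis
      proof (rule autonomous_ODEs_Cap_eq_after_exit[OF \<open>\<alpha> < \<beta>\<close> _ _ LF LG _ _ _ _ FG[OF Ys] Ys exits])
        show "X s = Y s" using agree[OF s inK, of s] s by auto
      qed (use dX' dY' s XS YS t False in auto)
    qed
  qed
qed

lemma autonomous_ODEs_Cap_eq:
  fixes X Y F G :: "real \<Rightarrow> real"
  assumes "\<alpha> < \<beta>"
    and dX: "\<And>t. t \<in> {a..b} \<Longrightarrow> (X has_real_derivative F (X t)) (at t within {a..b})"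
    and dY: "\<And>t. t \<in> {a..b} \<Longrightarrow> (Y has_real_derivative G (Y t)) (at t within {a..b})"
    and "\<And>y. y \<in> ereal_interval \<alpha> \<beta> \<Longrightarrow> F y = G y"
    and "locally_lipschitz F" "locally_lipschitz G"
    and "X a = Y a" "Y a \<in> ereal_interval \<alpha> \<beta>" "t \<in> {a..b}"
  shows "Cap (X t) \<alpha> \<beta> = Cap (Y t) \<alpha> \<beta>"
proof -
  define S where "S = X ` {a..b} \<union> Y ` {a..b}"
  have "compact S" unfolding S_def
    using DERIV_continuous_on[OF dX] DERIV_continuous_on[OF dY]
    by (intro compact_Un compact_continuous_image compact_Icc)
  then obtain LF LG where "LF-lipschitz_on S F" "LG-lipschitz_on S G"
    using \<open>locally_lipschitz F\<close> \<open>locally_lipschitz G\<close> by (metis locally_lipschitzE)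
  then show ?thesis
    using autonomous_ODEs_Cap_eq_lipschitz_on[OF \<open>\<alpha> < \<beta>\<close> dX dY] assms(4,7-9) by (auto simp: S_def)
qed

lemma autonomous_ODE_affine_image:
  fixes B f :: "real \<Rightarrow> real"
  assumes "q \<noteq> 0" "(B has_real_derivative f (B t)) (at t within S)"
  shows "((\<lambda>t. p + q * B t) has_real_derivative (\<lambda>z. q * f ((z - p) / q)) (p + q * B t)) (at t within S)"
  using assms by (auto intro!: derivative_eq_intros)

lemma locally_lipschitz_affine_conjugate:
  fixes f :: "real \<Rightarrow> real"
  assumes "locally_lipschitz f"
  shows "locally_lipschitz (\<lambda>z. q * f ((z - p) / q))"
  by (intro locally_lipschitz_mult locally_lipschitz_const locally_lipschitz_compose[OF assms]
      locally_lipschitz_divide locally_lipschitz_diff locally_lipschitz_ident)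

lemma deltaK_ge_support:
  assumes "\<alpha> \<le> ereal k" "ereal k \<le> \<beta>"
  shows "ereal (- k * l) \<le> deltaK \<alpha> \<beta> l"
  using assms
  by (cases \<alpha>; cases \<beta>) (auto simp: deltaK_def mult_right_mono mult_right_mono_neg)

lemma deltaK_at_Cap:
  assumes "0 < c" "\<alpha> < \<beta>"
  shows "deltaK \<alpha> \<beta> (c * (Cap z \<alpha> \<beta> - z)) = ereal (- c * Cap z \<alpha> \<beta> * (Cap z \<alpha> \<beta> - z))"
  using assms
  by (cases \<alpha>; cases \<beta>) (auto simp: deltaK_def Cap_def mult_less_0_iff zero_less_mult_iff)

(* deltaK is the support function of -K, so the infimum is attained at l = c * Cap (x/c) - x. *)
lemma INF_penalized_square:
  fixes c x :: real
  assumes "0 < c" "\<alpha> < \<beta>"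
  shows "(INF l. ereal (2 * c) * deltaK \<alpha> \<beta> l + ereal ((x + l)^2))
    = ereal (x^2 - (x - c * Cap (x / c) \<alpha> \<beta>)^2)"
proof (rule antisym)
  define k where "k = Cap (x / c) \<alpha> \<beta>"
  have "ereal (2 * c) * deltaK \<alpha> \<beta> (c * k - x) = ereal (- 2 * c * k * (c * k - x))"
    using deltaK_at_Cap[OF assms, of "x / c"] \<open>0 < c\<close> by (simp add: k_def right_diff_distrib)
  then show "(INF l. ereal (2 * c) * deltaK \<alpha> \<beta> l + ereal ((x + l)^2)) \<le> ereal (x^2 - (x - c * k)^2)"
    by (intro INF_lower2[of "c * k - x"]) (auto simp: power2_eq_square algebra_simps)
  show "ereal (x^2 - (x - c * k)^2) \<le> (INF l. ereal (2 * c) * deltaK \<alpha> \<beta> l + ereal ((x + l)^2))"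
  proof (rule INF_greatest)
    fix l
    have "ereal (2 * c) * ereal (- k * l) \<le> ereal (2 * c) * deltaK \<alpha> \<beta> l"
      using deltaK_ge_support[OF Cap_bounds[OF \<open>\<alpha> < \<beta>\<close>]] \<open>0 < c\<close>
      by (intro ereal_mult_left_mono) (auto simp: k_def)
    moreover have "2 * c * (- k * l) + (x + l)^2 - (x^2 - (x - c * k)^2) = (x + l - c * k)^2"
      by (simp add: power2_eq_square algebra_simps)
    then have "x^2 - (x - c * k)^2 \<le> 2 * c * (- k * l) + (x + l)^2"
      using zero_le_power2[of "x + l - c * k"] by linarith
    then have "ereal (x^2 - (x - c * k)^2) \<le> ereal (2 * c) * ereal (- k * l) + ereal ((x + l)^2)"
      by simp
    ultimately show "ereal (x^2 - (x - c * k)^2) \<le> ereal (2 * c) * deltaK \<alpha> \<beta> l + ereal ((x + l)^2)"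
      using add_right_mono order_trans by blast
  qed
qed

lemma constr_rhs_eq:
  assumes "b < 1" "\<alpha> < \<beta>"
  shows "constr_rhs b \<eta> \<kappa> \<sigma> \<rho> \<alpha> \<beta> y = - \<kappa> * y + 1/2 * \<sigma>^2 * y^2
    + 1/2 * (b / (1 - b)) * ((\<eta> + \<sigma> * \<rho> * y)^2
        - (\<eta> + \<sigma> * \<rho> * y - (1 - b) * Cap ((\<eta> + \<sigma> * \<rho> * y) / (1 - b)) \<alpha> \<beta>)^2)"
proof -
  have "(\<eta> + l + \<sigma> * \<rho> * y)^2 = ((\<eta> + \<sigma> * \<rho> * y) + l)^2" for l
    by (simp add: ac_simps)
  then show ?thesis
    using INF_penalized_square[of "1 - b" \<alpha> \<beta> "\<eta> + \<sigma> * \<rho> * y"] assms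
    by (simp add: constr_rhs_def)
qed

lemma constr_rhs_eq_unconstr_rhs:
  assumes "b < 1" "\<alpha> < \<beta>"
    and "(\<eta> + \<sigma> * \<rho> * y) / (1 - b) \<in> ereal_interval \<alpha> \<beta>"
  shows "constr_rhs b \<eta> \<kappa> \<sigma> \<rho> \<alpha> \<beta> y = unconstr_rhs b \<eta> \<kappa> \<sigma> \<rho> y"
proof -
  have "1 - b \<noteq> 0" using \<open>b < 1\<close> by simp
  then have "constr_rhs b \<eta> \<kappa> \<sigma> \<rho> \<alpha> \<beta> y
      = - \<kappa> * y + 1/2 * \<sigma>^2 * y^2 + 1/2 * (b / (1 - b)) * (\<eta> + \<sigma> * \<rho> * y)^2"
    using constr_rhs_eq[OF assms(1,2)] Cap_eq_self assms(3) by (simp add: ereal_interval_def)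
  also have "\<dots> = unconstr_rhs b \<eta> \<kappa> \<sigma> \<rho> y"
  proof -
    define k where "k = b / (1 - b)"
    have "r0 b \<eta> = - k / 2 * \<eta>^2" "r1 b \<eta> \<sigma> \<rho> \<kappa> = k * \<eta> * \<sigma> * \<rho> - \<kappa>"
      "r2 b \<sigma> \<rho> = \<sigma>^2 * (1 + k * \<rho>^2)"
      by (simp_all add: r0_def r1_def r2_def k_def)
    then show ?thesis
      unfolding unconstr_rhs_def k_def[symmetric] by (simp only:) (simp add: power2_eq_square algebra_simps)
  qed
  finally show ?thesis .
qed

lemma locally_lipschitz_constr_rhs:
  assumes "b < 1" "\<alpha> < \<beta>"
  shows "locally_lipschitz (constr_rhs b \<eta> \<kappa> \<sigma> \<rho> \<alpha> \<beta>)"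
  unfolding constr_rhs_eq[OF assms, abs_def]
  by (intro locally_lipschitz_add locally_lipschitz_diff locally_lipschitz_mult locally_lipschitz_power
      locally_lipschitz_divide locally_lipschitz_Cap[OF \<open>\<alpha> < \<beta>\<close>] locally_lipschitz_const
      locally_lipschitz_ident)

lemma locally_lipschitz_unconstr_rhs: "locally_lipschitz (unconstr_rhs b \<eta> \<kappa> \<sigma> \<rho>)"
  unfolding unconstr_rhs_def[abs_def]
  by (intro locally_lipschitz_add locally_lipschitz_minus locally_lipschitz_mult locally_lipschitz_power
      locally_lipschitz_const locally_lipschitz_ident)

lemma less_B_minus_iff:
  assumes "0 < \<sigma>" "b < 1"
  shows "ereal (\<rho> * y) < B_minus b \<eta> \<sigma> \<alpha> \<longleftrightarrow> ereal ((\<eta> + \<sigma> * \<rho> * y) / (1 - b)) < \<alpha>"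
proof -
  have "0 < 1 - b" using \<open>b < 1\<close> by simp
  then show ?thesis
    using assms by (cases \<alpha>) (auto simp: B_minus_def field_simps divide_ereal_def)
qed

lemma B_plus_less_iff:
  assumes "0 < \<sigma>" "b < 1"
  shows "B_plus b \<eta> \<sigma> \<beta> < ereal (\<rho> * y) \<longleftrightarrow> \<beta> < ereal ((\<eta> + \<sigma> * \<rho> * y) / (1 - b))"
proof -
  have "0 < 1 - b" using \<open>b < 1\<close> by simp
  then show ?thesis
    using assms by (cases \<beta>) (auto simp: B_plus_def field_simps divide_ereal_def)
qed

lemma lambda_star_eq:
  assumes "0 < \<sigma>" "b < 1" "\<alpha> < \<beta>"
  shows "lambda_star b \<eta> \<sigma> \<rho> \<alpha> \<beta> y
    = (1 - b) * Cap ((\<eta> + \<sigma> * \<rho> * y) / (1 - b)) \<alpha> \<beta> - (\<eta> + \<sigma> * \<rho> * y)"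
  using assms
  by (cases \<alpha>; cases \<beta>)
     (auto simp: lambda_star_def less_B_minus_iff B_plus_less_iff Cap_def not_less)

lemma pi_star_eq_Cap:
  assumes "0 < \<sigma>" "b < 1" "\<alpha> < \<beta>"
  shows "pi_star b \<eta> \<sigma> \<rho> \<alpha> \<beta> T B t = Cap ((\<eta> + \<sigma> * \<rho> * B (T - t)) / (1 - b)) \<alpha> \<beta>"
  using assms by (simp add: pi_star_def lambda_star_eq)

lemma Cap_constrained_eq_Cap_unconstrained:
  fixes B Bu :: "real \<Rightarrow> real"
  assumes "b < 1" "\<alpha> < \<beta>" "\<sigma> * \<rho> \<noteq> 0"
    and dB: "\<And>\<tau>. \<tau> \<in> {0..T} \<Longrightarrow>
           (B has_real_derivative constr_rhs b \<eta> \<kappa> \<sigma> \<rho> \<alpha> \<beta> (B \<tau>)) (at \<tau> within {0..T})"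
    and dBu: "\<And>\<tau>. \<tau> \<in> {0..T} \<Longrightarrow>
           (Bu has_real_derivative unconstr_rhs b \<eta> \<kappa> \<sigma> \<rho> (Bu \<tau>)) (at \<tau> within {0..T})"
    and "B 0 = Bu 0" "(\<eta> + \<sigma> * \<rho> * B 0) / (1 - b) \<in> ereal_interval \<alpha> \<beta>"
    and "\<tau> \<in> {0..T}"
  shows "Cap ((\<eta> + \<sigma> * \<rho> * B \<tau>) / (1 - b)) \<alpha> \<beta> = Cap ((\<eta> + \<sigma> * \<rho> * Bu \<tau>) / (1 - b)) \<alpha> \<beta>"
proof -
  define p q where "p = \<eta> / (1 - b)" and "q = \<sigma> * \<rho> / (1 - b)"
  have affine: "(\<eta> + \<sigma> * \<rho> * y) / (1 - b) = p + q * y" for y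
    by (simp add: p_def q_def add_divide_distrib)
  have "q \<noteq> 0" using \<open>\<sigma> * \<rho> \<noteq> 0\<close> \<open>b < 1\<close> by (simp add: q_def)
  define F G where "F = (\<lambda>z. q * constr_rhs b \<eta> \<kappa> \<sigma> \<rho> \<alpha> \<beta> ((z - p) / q))"
    and "G = (\<lambda>z. q * unconstr_rhs b \<eta> \<kappa> \<sigma> \<rho> ((z - p) / q))"
  have "F z = G z" if "z \<in> ereal_interval \<alpha> \<beta>" for z
  proof -
    have "(\<eta> + \<sigma> * \<rho> * ((z - p) / q)) / (1 - b) = z"
      using affine[of "(z - p) / q"] \<open>q \<noteq> 0\<close> by simp
    from constr_rhs_eq_unconstr_rhs[OF \<open>b < 1\<close> \<open>\<alpha> < \<beta>\<close>, of \<eta> \<sigma> \<rho> "(z - p) / q", unfolded this]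
    show ?thesis using that by (simp add: F_def G_def)
  qed
  moreover have "locally_lipschitz F" "locally_lipschitz G" unfolding F_def G_def
    by (intro locally_lipschitz_affine_conjugate locally_lipschitz_constr_rhs locally_lipschitz_unconstr_rhs
        \<open>b < 1\<close> \<open>\<alpha> < \<beta>\<close>)+
  moreover have "((\<lambda>\<tau>. p + q * B \<tau>) has_real_derivative F (p + q * B \<tau>)) (at \<tau> within {0..T})"
    "((\<lambda>\<tau>. p + q * Bu \<tau>) has_real_derivative G (p + q * Bu \<tau>)) (at \<tau> within {0..T})"
    if "\<tau> \<in> {0..T}" for \<tau>
    unfolding F_def G_def using autonomous_ODE_affine_image[OF \<open>q \<noteq> 0\<close>] dB dBu that by blast+
  ultimately show ?thesis
    using autonomous_ODEs_Cap_eq[OF \<open>\<alpha> < \<beta>\<close>, of 0 T "\<lambda>\<tau>. p + q * B \<tau>" F "\<lambda>\<tau>. p + q * Bu \<tau>" G \<tau>]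
      assms(6-8) by (simp add: affine)
qed

theorem lemma2p9:
  fixes T \<eta> \<kappa> \<sigma> \<rho> b :: real and \<alpha> \<beta> :: ereal
    and B Bu :: "real \<Rightarrow> real"
  assumes "T > 0" and "\<eta> > 0" and "\<kappa> > 0" and "\<sigma> > 0"
    and "-1 < \<rho>" and "\<rho> < 1" and "b < 1" and "b \<noteq> 0"
    and "\<alpha> < \<beta>"
    and "B 0 = 0"
    and "\<And>\<tau>. \<tau> \<in> {0..T} \<Longrightarrow>
           (B has_real_derivative constr_rhs b \<eta> \<kappa> \<sigma> \<rho> \<alpha> \<beta> (B \<tau>)) (at \<tau> within {0..T})"
    and "Bu 0 = 0"
    and "\<And>\<tau>. \<tau> \<in> {0..T} \<Longrightarrow>
           (Bu has_real_derivative unconstr_rhs b \<eta> \<kappa> \<sigma> \<rho> (Bu \<tau>)) (at \<tau> within {0..T})"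
    and "\<rho> = 0 \<or> (\<alpha> \<le> ereal (pi_M b \<eta>) \<and> ereal (pi_M b \<eta>) \<le> \<beta>)"
  shows "\<forall>t\<in>{0..T}. pi_star b \<eta> \<sigma> \<rho> \<alpha> \<beta> T B t = Cap (pi_u b \<eta> \<sigma> \<rho> T Bu t) \<alpha> \<beta>"
proof -
  have pi_star: "pi_star b \<eta> \<sigma> \<rho> \<alpha> \<beta> T B t = Cap ((\<eta> + \<sigma> * \<rho> * B (T - t)) / (1 - b)) \<alpha> \<beta>" for t
    using pi_star_eq_Cap[OF \<open>\<sigma> > 0\<close> \<open>b < 1\<close> \<open>\<alpha> < \<beta>\<close>] .
  have pi_u: "pi_u b \<eta> \<sigma> \<rho> T Bu t = (\<eta> + \<sigma> * \<rho> * Bu (T - t)) / (1 - b)" for t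
    by (simp add: pi_u_def)
  show ?thesis
  proof (cases "\<rho> = 0")
    case True
    then show ?thesis unfolding pi_star pi_u by simp
  next
    case False
    then have "\<eta> / (1 - b) \<in> ereal_interval \<alpha> \<beta>"
      using \<open>\<rho> = 0 \<or> _\<close> by (simp add: pi_M_def ereal_interval_def)
    then show ?thesis
      unfolding pi_star pi_u
      using Cap_constrained_eq_Cap_unconstrained[OF \<open>b < 1\<close> \<open>\<alpha> < \<beta>\<close>, of \<sigma> \<rho> T B \<eta> \<kappa> Bu]
        False \<open>\<sigma> > 0\<close> assms(10-13) by auto
  qed
qed

end
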